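(* Let $k=\mathbb{F}_q$ with $q$ odd, $q>3$, $n\ge1$, $A=M_{2n}(k)$, $J_{2n}=\begin{pmatrix}0&I_n\\-I_n&0\end{pmatrix}$, $a^{\sim}=J_{2n}a^tJ_{2n}^{-1}$. Let $V=k^{2n}$ (row vectors) with $[x,y]=x\,(yJ_{2n})^{t}$, let $M=V^2$ with right $A$-action $(x,y)a=(xa,ya)$, let $\psi$ be a nontrivial character of $(k,+)$, and define $\chi((x,y),(v,z))=\psi([x,z]-[y,v])$ and $\gamma(u,(x,y))=\psi([xu,y])$ for $u\in A$ with $u^{\sim}=u$. Let $\mathrm{U}(\gamma,\chi)$ be the group of all $A$-linear automorphisms $\beta$ of $M$ such that $\gamma(u,\beta(m))=\gamma(u,m)$ for all $u\in A$ with $u^\sim=u$ and all $m\in M$, and $\chi(\beta(m),\beta(m'))=\chi(m,m')$ for all $m,m'\in M$. Then $\mathrm{U}(\gamma,\chi)\cong\mathrm{SL}_2(k)$. *)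

theory Defs
  imports "Jordan_Normal_Form.Matrix" "Jordan_Normal_Form.Determinant" "HOL-Algebra.Group"
begin

(* Row vector times matrix: x a, with x a row vector (entries (x a)_j = sum_i x_i a_ij). *)
definition rvm :: "'a::comm_semiring_0 vec \<Rightarrow> 'a mat \<Rightarrow> 'a vec" where
  "rvm x a = transpose_mat a *\<^sub>v x"

definition Jmat :: "nat \<Rightarrow> 'a::comm_ring_1 mat" where
  "Jmat n = four_block_mat (0\<^sub>m n n) (1\<^sub>m n) (- 1\<^sub>m n) (0\<^sub>m n n)"

definition Jinv :: "nat \<Rightarrow> 'a::comm_ring_1 mat" where
  "Jinv n = four_block_mat (0\<^sub>m n n) (- 1\<^sub>m n) (1\<^sub>m n) (0\<^sub>m n n)"

definition tilde :: "nat \<Rightarrow> 'a::comm_ring_1 mat \<Rightarrow> 'a mat" where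
  "tilde n a = Jmat n * transpose_mat a * Jinv n"

definition sform :: "nat \<Rightarrow> 'a::comm_ring_1 vec \<Rightarrow> 'a vec \<Rightarrow> 'a" where
  "sform n x y = x \<bullet> rvm y (Jmat n)"

definition Mset :: "nat \<Rightarrow> ('a vec \<times> 'a vec) set" where
  "Mset n = carrier_vec (2*n) \<times> carrier_vec (2*n)"

definition addM :: "'a::plus vec \<times> 'a vec \<Rightarrow> 'a vec \<times> 'a vec \<Rightarrow> 'a vec \<times> 'a vec" where
  "addM m m' = (fst m + fst m', snd m + snd m')"

definition actM :: "'a::comm_semiring_0 vec \<times> 'a vec \<Rightarrow> 'a mat \<Rightarrow> 'a vec \<times> 'a vec" where
  "actM m a = (rvm (fst m) a, rvm (snd m) a)"

definition nontriv_add_char :: "('a::ab_group_add \<Rightarrow> complex) \<Rightarrow> bool" where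
  "nontriv_add_char \<psi> \<longleftrightarrow> (\<forall>a b. \<psi> (a + b) = \<psi> a * \<psi> b) \<and> (\<forall>a. \<psi> a \<noteq> 0) \<and> (\<exists>a. \<psi> a \<noteq> 1)"

definition chiM :: "nat \<Rightarrow> ('a::comm_ring_1 \<Rightarrow> complex) \<Rightarrow> 'a vec \<times> 'a vec \<Rightarrow> 'a vec \<times> 'a vec \<Rightarrow> complex" where
  "chiM n \<psi> m m' = \<psi> (sform n (fst m) (snd m') - sform n (snd m) (fst m'))"

definition gammaM :: "nat \<Rightarrow> ('a::comm_ring_1 \<Rightarrow> complex) \<Rightarrow> 'a mat \<Rightarrow> 'a vec \<times> 'a vec \<Rightarrow> complex" where
  "gammaM n \<psi> u m = \<psi> (sform n (rvm (fst m) u) (snd m))"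

definition symA :: "nat \<Rightarrow> 'a::comm_ring_1 mat set" where
  "symA n = {u \<in> carrier_mat (2*n) (2*n). tilde n u = u}"

definition AutA :: "nat \<Rightarrow> ('a::comm_ring_1 vec \<times> 'a vec \<Rightarrow> 'a vec \<times> 'a vec) set" where
  "AutA n = {\<beta>. \<beta> \<in> extensional (Mset n) \<and> bij_betw \<beta> (Mset n) (Mset n)
      \<and> (\<forall>m\<in>Mset n. \<forall>m'\<in>Mset n. \<beta> (addM m m') = addM (\<beta> m) (\<beta> m'))
      \<and> (\<forall>m\<in>Mset n. \<forall>a\<in>carrier_mat (2*n) (2*n). \<beta> (actM m a) = actM (\<beta> m) a)}"

definition Ugroup :: "nat \<Rightarrow> ('a::comm_ring_1 \<Rightarrow> complex) \<Rightarrow> ('a vec \<times> 'a vec \<Rightarrow> 'a vec \<times> 'a vec) monoid" where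
  "Ugroup n \<psi> = \<lparr> carrier = {\<beta> \<in> AutA n.
        (\<forall>u\<in>symA n. \<forall>m\<in>Mset n. gammaM n \<psi> u (\<beta> m) = gammaM n \<psi> u m)
      \<and> (\<forall>m\<in>Mset n. \<forall>m'\<in>Mset n. chiM n \<psi> (\<beta> m) (\<beta> m') = chiM n \<psi> m m')},
     mult = (\<lambda>\<beta> \<beta>'. compose (Mset n) \<beta> \<beta>'),
     one = restrict id (Mset n) \<rparr>"

definition SL2 :: "('a::comm_ring_1 mat) monoid" where
  "SL2 = \<lparr> carrier = {a \<in> carrier_mat 2 2. det a = 1}, mult = (*), one = 1\<^sub>m 2 \<rparr>"

end

theory Submission
  imports Defs "HOL-Number_Theory.Residues"
begin

(* M = V^2 is a cyclic right A-module, generated by (e_0, e_1): the pair (x, y) is (e_0, e_1) a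
   for the matrix a with rows x and y. Hence an A-linear endomorphism of M is determined by the
   image of (e_0, e_1), i.e. by a 2x2 matrix g, and acts by (x, y) \<mapsto> (g00 x + g01 y, g10 x + g11 y).
   Such a map multiplies the pairing [x,z] - [y,v] by det g, and, because [xu, x] = 0 for
   u~ = u when 2 is invertible, it multiplies [xu, y] by det g as well. As \<psi> is nontrivial,
   \<psi>(d t) = \<psi>(t) for all t forces d = 1, so U(\<gamma>, \<chi>) consists exactly of the maps with
   det g = 1. *)

lemma Jmat_carrier [simp]: "Jmat n \<in> carrier_mat (2*n) (2*n)"
  unfolding Jmat_def by (auto intro!: four_block_carrier_mat[where ?nr1.0 = n and ?nr2.0 = n, simplified])

lemma Jinv_carrier [simp]: "Jinv n \<in> carrier_mat (2*n) (2*n)"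
  unfolding Jinv_def by (auto intro!: four_block_carrier_mat[where ?nr1.0 = n and ?nr2.0 = n, simplified])

lemma dim_Jmat [simp]: "dim_row (Jmat n) = 2*n" "dim_col (Jmat n) = 2*n"
  using carrier_matD[OF Jmat_carrier[of n]] by auto

lemma Jinv_eq_uminus_Jmat: "(Jinv n :: 'a::comm_ring_1 mat) = - Jmat n"
  unfolding Jinv_def Jmat_def by (rule eq_matI) auto

lemma transpose_Jmat: "transpose_mat (Jmat n :: 'a::comm_ring_1 mat) = Jinv n"
  unfolding Jinv_def Jmat_def by (rule eq_matI) auto

lemma Jmat_mult_Jmat: "(Jmat n :: 'a::comm_ring_1 mat) * Jmat n = - 1\<^sub>m (2*n)"
  unfolding Jmat_def
  by (subst mult_four_block_mat[where ?nr1.0 = n and ?nr2.0 = n and ?n1.0 = n and ?n2.0 = n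
        and ?nc1.0 = n and ?nc2.0 = n]; (rule eq_matI)?) auto

lemma Jmat_index_n_0: "1 \<le> n \<Longrightarrow> (Jmat n :: 'a::comm_ring_1 mat) $$ (n, 0) = -1"
  unfolding Jmat_def by simp

subsection \<open>Row vectors times matrices and the symplectic form\<close>

lemma dim_rvm [simp]: "dim_vec (rvm x a) = dim_col a"
  unfolding rvm_def by simp

lemma rvm_carrier [simp]: "a \<in> carrier_mat N N' \<Longrightarrow> rvm x a \<in> carrier_vec N'"
  unfolding carrier_vec_def by simp

lemma rvm_index:
  assumes "x \<in> carrier_vec N" "a \<in> carrier_mat N N'" "j < N'"
  shows "rvm x a $ j = (\<Sum>i<N. x $ i * a $$ (i, j))"
  using assms unfolding rvm_def by (simp add: scalar_prod_def atLeast0LessThan mult.commute)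

lemma rvm_lincomb:
  assumes "x \<in> carrier_vec N" "y \<in> carrier_vec N" "a \<in> carrier_mat N N'"
  shows "rvm (c \<cdot>\<^sub>v x + d \<cdot>\<^sub>v y) a = c \<cdot>\<^sub>v rvm x a + d \<cdot>\<^sub>v rvm y a"
proof (rule eq_vecI)
  fix j assume "j < dim_vec (c \<cdot>\<^sub>v rvm x a + d \<cdot>\<^sub>v rvm y a)"
  with assms show "rvm (c \<cdot>\<^sub>v x + d \<cdot>\<^sub>v y) a $ j = (c \<cdot>\<^sub>v rvm x a + d \<cdot>\<^sub>v rvm y a) $ j"
    by (auto simp: rvm_index[where N = N] sum_distrib_left sum.distrib algebra_simps)
qed (use assms in auto)

lemma rvm_add:
  fixes x :: "'a::comm_semiring_1 vec"
  assumes "x \<in> carrier_vec N" "y \<in> carrier_vec N" "a \<in> carrier_mat N N'"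
  shows "rvm (x + y) a = rvm x a + rvm y a"
  using rvm_lincomb[OF assms, of 1 1] by simp

lemma sform_eq_sum:
  assumes "x \<in> carrier_vec (2*n)" "y \<in> carrier_vec (2*n)"
  shows "sform n x y = (\<Sum>j<2*n. x $ j * rvm y (Jmat n) $ j)"
  using assms unfolding sform_def scalar_prod_def by (auto intro!: sum.cong)

lemma sform_lincomb_left:
  assumes "x \<in> carrier_vec (2*n)" "y \<in> carrier_vec (2*n)" "z \<in> carrier_vec (2*n)"
  shows "sform n (c \<cdot>\<^sub>v x + d \<cdot>\<^sub>v y) z = c * sform n x z + d * sform n y z"
  using assms by (auto simp: sform_eq_sum sum_distrib_left sum.distrib algebra_simps)

lemma sform_lincomb_right:
  assumes "x \<in> carrier_vec (2*n)" "y \<in> carrier_vec (2*n)" "z \<in> carrier_vec (2*n)"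
  shows "sform n z (c \<cdot>\<^sub>v x + d \<cdot>\<^sub>v y) = c * sform n z x + d * sform n z y"
  using assms
  by (auto simp: sform_eq_sum rvm_lincomb[OF assms(1,2) Jmat_carrier] sum_distrib_left sum.distrib
      algebra_simps)

lemma sform_add_left:
  assumes "x \<in> carrier_vec (2*n)" "y \<in> carrier_vec (2*n)" "z \<in> carrier_vec (2*n)"
  shows "sform n (x + y) z = sform n x z + sform n y z"
  using sform_lincomb_left[OF assms, of 1 1] by simp

lemma sform_add_right:
  assumes "x \<in> carrier_vec (2*n)" "y \<in> carrier_vec (2*n)" "z \<in> carrier_vec (2*n)"
  shows "sform n z (x + y) = sform n z x + sform n z y"
  using sform_lincomb_right[OF assms, of 1 1] by simp

lemma sform_unit_vec_0_n:
  assumes "1 \<le> n"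
  shows "sform n (unit_vec (2*n) 0) (unit_vec (2*n) n) = (-1 :: 'a::comm_ring_1)"
proof -
  have "sform n (unit_vec (2*n) 0) (unit_vec (2*n) n) = rvm (unit_vec (2*n) n) (Jmat n) $ 0"
    unfolding sform_def using assms rvm_carrier[OF Jmat_carrier]
    by (subst scalar_prod_left_unit[of _ "2*n"]) auto
  also have "\<dots> = (\<Sum>k<2*n. unit_vec (2*n) n $ k * (Jmat n :: 'a mat) $$ (k, 0))"
    using assms by (intro rvm_index) auto
  also have "\<dots> = (\<Sum>k<2*n. if k = n then (Jmat n :: 'a mat) $$ (n, 0) else 0)"
    by (intro sum.cong) auto
  also have "\<dots> = -1"
    using assms by (simp add: Jmat_index_n_0)
  finally show ?thesis .
qed

text \<open>If \<open>tilde n u = u\<close>, the Gram matrix \<open>u J\<^sup>t = J u\<^sup>t J\<^sup>t J\<^sup>t = -J u\<^sup>t\<close> of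
  \<open>(x, y) \<mapsto> [xu, y]\<close> is skew-symmetric.\<close>

lemma sform_rvm_symA_self:
  assumes u: "u \<in> symA n" and two: "(2::'a::idom) \<noteq> 0" and x: "x \<in> carrier_vec (2*n)"
  shows "sform n (rvm x u) x = (0::'a)"
proof -
  let ?J = "Jmat n :: 'a mat"
  have uc: "u \<in> carrier_mat (2*n) (2*n)" and ut: "?J * transpose_mat u * Jinv n = u"
    using u unfolding symA_def tilde_def by auto
  have Juc: "?J * transpose_mat u \<in> carrier_mat (2*n) (2*n)"
    using uc by (intro mult_carrier_mat[of _ _ "2*n"]) simp_all
  define K where "K = u * transpose_mat ?J"
  have Kc: "K \<in> carrier_mat (2*n) (2*n)"
    unfolding K_def using uc by simp
  have Jx: "transpose_mat ?J *\<^sub>v x \<in> carrier_vec (2*n)"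
    using x by (intro mult_mat_vec_carrier[of _ "2*n" "2*n"]) simp_all
  have "sform n (rvm x u) x = (transpose_mat u *\<^sub>v x) \<bullet> (transpose_mat ?J *\<^sub>v x)"
    unfolding sform_def rvm_def ..
  also have "\<dots> = x \<bullet> (u *\<^sub>v (transpose_mat ?J *\<^sub>v x))"
    by (rule transpose_vec_mult_scalar[OF uc Jx x])
  also have "\<dots> = x \<bullet> (K *\<^sub>v x)"
    unfolding K_def using uc x by (simp add: assoc_mult_mat_vec[symmetric, of _ "2*n" "2*n" _ "2*n"])
  finally have form: "sform n (rvm x u) x = x \<bullet> (K *\<^sub>v x)" .
  have JJ: "Jinv n * Jinv n = - 1\<^sub>m (2*n)"
    unfolding Jinv_eq_uminus_Jmat using Jmat_mult_Jmat[of n] by simp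
  have "K = (?J * transpose_mat u * Jinv n) * Jinv n"
    unfolding K_def transpose_Jmat using ut by simp
  also have "\<dots> = (?J * transpose_mat u) * (Jinv n * Jinv n)"
    using uc Juc by (intro assoc_mult_mat[of _ "2*n" "2*n" _ "2*n" _ "2*n"]) simp_all
  also have "\<dots> = - (?J * transpose_mat u)"
    unfolding JJ using uc by simp
  finally have skew: "transpose_mat K = - K"
    unfolding K_def using uc by (simp add: transpose_mult[of _ "2*n" "2*n"] transpose_uminus)
  have "x \<bullet> (K *\<^sub>v x) = (transpose_mat K *\<^sub>v x) \<bullet> x"
    by (rule transpose_vec_mult_scalar[OF Kc x x, symmetric])
  also have "\<dots> = - (x \<bullet> (K *\<^sub>v x))"
    unfolding skew using Kc x by (simp add: comm_scalar_prod[of _ "2*n"])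
  finally have "2 * (x \<bullet> (K *\<^sub>v x)) = 0"
    by (simp add: algebra_simps)
  with two form show ?thesis by simp
qed

lemma sform_rvm_symA_swap:
  fixes x y :: "'a::idom vec"
  assumes u: "u \<in> symA n" and two: "(2::'a::idom) \<noteq> 0"
    and x: "x \<in> carrier_vec (2*n)" and y: "y \<in> carrier_vec (2*n)"
  shows "sform n (rvm y u) x = - sform n (rvm x u) y"
proof -
  have uc: "u \<in> carrier_mat (2*n) (2*n)"
    using u unfolding symA_def by simp
  have "sform n (rvm (x + y) u) (x + y) = (0::'a)"
    using x y by (intro sform_rvm_symA_self[OF u two]) simp
  then have "sform n (rvm x u) x + sform n (rvm x u) y + sform n (rvm y u) x + sform n (rvm y u) y = 0"
    using x y uc by (simp add: rvm_add[OF _ _ uc] sform_add_left sform_add_right algebra_simps)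
  then show ?thesis
    using sform_rvm_symA_self[OF u two x] sform_rvm_symA_self[OF u two y]
    by (simp add: eq_neg_iff_add_eq_0 algebra_simps)
qed

subsection \<open>The action of \<open>2 \<times> 2\<close> matrices on \<open>M\<close>\<close>

definition mat2_act :: "'a::comm_ring_1 mat \<Rightarrow> 'a vec \<times> 'a vec \<Rightarrow> 'a vec \<times> 'a vec" where
  "mat2_act g m = (g $$ (0,0) \<cdot>\<^sub>v fst m + g $$ (0,1) \<cdot>\<^sub>v snd m, g $$ (1,0) \<cdot>\<^sub>v fst m + g $$ (1,1) \<cdot>\<^sub>v snd m)"

lemma mat2_act_Mset: "m \<in> Mset n \<Longrightarrow> mat2_act g m \<in> Mset n"
  unfolding mat2_act_def Mset_def by auto

lemma index_mult_mat_2x2: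
  assumes "g \<in> carrier_mat 2 2" "h \<in> carrier_mat 2 2" "i < 2" "j < 2"
  shows "(g * h) $$ (i, j) = g $$ (i,0) * h $$ (0,j) + g $$ (i,1) * h $$ (1,j)"
  using assms by (simp add: scalar_prod_def numeral_2_eq_2 sum.atLeast0_lessThan_Suc)

lemma det_2x2:
  assumes "g \<in> carrier_mat 2 2"
  shows "det g = g $$ (0,0) * g $$ (1,1) - g $$ (0,1) * g $$ (1,0)"
proof -
  have "det g = (\<Sum>j<2. g $$ (0,j) * cofactor g 0 j)"
    using assms by (intro laplace_expansion_row) auto
  also have "\<dots> = g $$ (0,0) * cofactor g 0 0 + g $$ (0,1) * cofactor g 0 1"
    by (simp add: numeral_2_eq_2)
  also have "cofactor g 0 0 = g $$ (1,1)"
    unfolding cofactor_def using assms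
    by (subst det_single[of "mat_delete g 0 0"]) (auto simp: mat_delete_def numeral_2_eq_2)
  also have "cofactor g 0 1 = - g $$ (1,0)"
    unfolding cofactor_def using assms
    by (subst det_single[of "mat_delete g 0 1"]) (auto simp: mat_delete_def numeral_2_eq_2)
  finally show ?thesis by simp
qed

lemma mat2_act_mult:
  assumes g: "g \<in> carrier_mat 2 2" and h: "h \<in> carrier_mat 2 2" and m: "m \<in> Mset n"
  shows "mat2_act g (mat2_act h m) = mat2_act (g * h) m"
  using m unfolding mat2_act_def Mset_def
  by (auto simp: index_mult_mat_2x2[OF g h] algebra_simps)

lemma mat2_act_one: "m \<in> Mset n \<Longrightarrow> mat2_act (1\<^sub>m 2) m = m"
  unfolding mat2_act_def Mset_def by (cases m) auto

lemma mat2_act_addM: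
  "m \<in> Mset n \<Longrightarrow> m' \<in> Mset n \<Longrightarrow> mat2_act g (addM m m') = addM (mat2_act g m) (mat2_act g m')"
  unfolding mat2_act_def Mset_def addM_def by (auto simp: algebra_simps)

lemma mat2_act_actM:
  "m \<in> Mset n \<Longrightarrow> a \<in> carrier_mat (2*n) (2*n) \<Longrightarrow> mat2_act g (actM m a) = actM (mat2_act g m) a"
  unfolding mat2_act_def Mset_def actM_def by (auto simp: rvm_lincomb)

lemma pairing_mat2_act:
  assumes g: "g \<in> carrier_mat 2 2" and m: "m \<in> Mset n" and m': "m' \<in> Mset n"
  shows "sform n (fst (mat2_act g m)) (snd (mat2_act g m')) - sform n (snd (mat2_act g m)) (fst (mat2_act g m'))
    = det g * (sform n (fst m) (snd m') - sform n (snd m) (fst m'))"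
  using m m' unfolding Mset_def mat2_act_def
  by (auto simp: sform_lincomb_left sform_lincomb_right det_2x2[OF g] algebra_simps)

lemma sform_rvm_symA_mat2_act:
  assumes u: "u \<in> symA n" and two: "(2::'a::idom) \<noteq> 0" and g: "g \<in> carrier_mat 2 2"
    and m: "m \<in> (Mset n :: ('a vec \<times> 'a vec) set)"
  shows "sform n (rvm (fst (mat2_act g m)) u) (snd (mat2_act g m)) = det g * sform n (rvm (fst m) u) (snd m)"
proof -
  have uc: "u \<in> carrier_mat (2*n) (2*n)"
    using u unfolding symA_def by simp
  obtain x y where xy: "m = (x, y)" "x \<in> carrier_vec (2*n)" "y \<in> carrier_vec (2*n)"
    using m unfolding Mset_def by auto
  with uc show ?thesis unfolding mat2_act_def
    by (simp add: rvm_lincomb[OF _ _ uc] sform_lincomb_left sform_lincomb_right det_2x2[OF g]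
        sform_rvm_symA_swap[OF u two xy(2,3)] sform_rvm_symA_self[OF u two] algebra_simps)
qed

subsection \<open>\<open>A\<close>-linear automorphisms of \<open>M\<close> as \<open>2 \<times> 2\<close> matrices\<close>

definition mat_of_aut :: "nat \<Rightarrow> ('a::comm_ring_1 vec \<times> 'a vec \<Rightarrow> 'a vec \<times> 'a vec) \<Rightarrow> 'a mat" where
  "mat_of_aut n \<beta> =
     mat 2 2 (\<lambda>(i,j). (if i = 0 then fst else snd) (\<beta> (unit_vec (2*n) 0, unit_vec (2*n) 1)) $ j)"

definition aut_of_mat :: "nat \<Rightarrow> 'a::comm_ring_1 mat \<Rightarrow> 'a vec \<times> 'a vec \<Rightarrow> 'a vec \<times> 'a vec" where
  "aut_of_mat n g = restrict (mat2_act g) (Mset n)"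

lemma mat_of_aut_carrier [simp]: "mat_of_aut n \<beta> \<in> carrier_mat 2 2"
  unfolding mat_of_aut_def by simp

lemma unit_pair_Mset: "1 \<le> n \<Longrightarrow> (unit_vec (2*n) 0, unit_vec (2*n) 1) \<in> Mset n"
  unfolding Mset_def by simp

definition rows2_mat :: "nat \<Rightarrow> 'a::zero vec \<Rightarrow> 'a vec \<Rightarrow> 'a mat" where
  "rows2_mat N x y = mat N N (\<lambda>(i,j). if i = 0 then x $ j else if i = 1 then y $ j else 0)"

lemma rvm_rows2_mat:
  assumes p: "p \<in> carrier_vec N" and N: "1 < N" and x: "x \<in> carrier_vec N" and y: "y \<in> carrier_vec N"
  shows "rvm p (rows2_mat N x y) = p $ 0 \<cdot>\<^sub>v x + p $ 1 \<cdot>\<^sub>v y"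
proof (rule eq_vecI)
  fix j assume "j < dim_vec (p $ 0 \<cdot>\<^sub>v x + p $ 1 \<cdot>\<^sub>v y)"
  then have j: "j < N"
    using y by simp
  have "rvm p (rows2_mat N x y) $ j = (\<Sum>k<N. p $ k * rows2_mat N x y $$ (k, j))"
    using p j by (intro rvm_index) (auto simp: rows2_mat_def)
  also have "\<dots> = (\<Sum>k<N. (if k = 0 then p $ 0 * x $ j else 0) + (if k = 1 then p $ 1 * y $ j else 0))"
    using j by (intro sum.cong) (auto simp: rows2_mat_def)
  also have "\<dots> = (p $ 0 \<cdot>\<^sub>v x + p $ 1 \<cdot>\<^sub>v y) $ j"
    using N j x y by (simp add: sum.distrib)
  finally show "rvm p (rows2_mat N x y) $ j = (p $ 0 \<cdot>\<^sub>v x + p $ 1 \<cdot>\<^sub>v y) $ j" .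
qed (use y in \<open>simp add: rows2_mat_def\<close>)

lemma actM_unit_pair_rows2_mat:
  fixes x y :: "'a::comm_ring_1 vec"
  assumes "1 \<le> n" "x \<in> carrier_vec (2*n)" "y \<in> carrier_vec (2*n)"
  shows "actM (unit_vec (2*n) 0, unit_vec (2*n) 1) (rows2_mat (2*n) x y) = (x, y)"
  using assms unfolding actM_def by (auto simp: rvm_rows2_mat)

lemma AutA_apply:
  assumes \<beta>: "\<beta> \<in> AutA n" and n: "1 \<le> n" and m: "m \<in> Mset n"
  shows "\<beta> m = mat2_act (mat_of_aut n \<beta>) m"
proof -
  let ?e = "(unit_vec (2*n) 0, unit_vec (2*n) 1)"
  obtain x y where m_xy: "m = (x, y)" and x: "x \<in> carrier_vec (2*n)" and y: "y \<in> carrier_vec (2*n)"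
    using m unfolding Mset_def by auto
  let ?a = "rows2_mat (2*n) x y"
  have "?a \<in> carrier_mat (2*n) (2*n)"
    unfolding rows2_mat_def by simp
  then have "\<beta> (actM ?e ?a) = actM (\<beta> ?e) ?a"
    using \<beta> unit_pair_Mset[OF n] unfolding AutA_def by blast
  then have \<beta>_m: "\<beta> m = actM (\<beta> ?e) ?a"
    unfolding actM_unit_pair_rows2_mat[OF n x y] m_xy .
  have "\<beta> ?e \<in> Mset n"
    using \<beta> unit_pair_Mset[OF n] unfolding AutA_def by (auto dest: bij_betwE)
  then obtain p r where pr: "\<beta> ?e = (p, r)" "p \<in> carrier_vec (2*n)" "r \<in> carrier_vec (2*n)"
    unfolding Mset_def by auto
  have "actM (\<beta> ?e) ?a = mat2_act (mat_of_aut n \<beta>) (x, y)"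
    using n x y pr unfolding actM_def mat2_act_def mat_of_aut_def by (simp add: rvm_rows2_mat)
  with \<beta>_m m_xy show ?thesis by simp
qed

lemma AutA_eq_aut_of_mat:
  assumes "\<beta> \<in> AutA n" "1 \<le> n"
  shows "\<beta> = aut_of_mat n (mat_of_aut n \<beta>)"
proof
  fix m
  show "\<beta> m = aut_of_mat n (mat_of_aut n \<beta>) m"
  proof (cases "m \<in> Mset n")
    case True
    then show ?thesis
      using AutA_apply[OF assms] unfolding aut_of_mat_def by simp
  next
    case False
    then show ?thesis
      using assms(1) unfolding aut_of_mat_def AutA_def extensional_def by (cases m) auto
  qed
qed

lemma mat_of_aut_aut_of_mat:
  assumes n: "1 \<le> n" and g: "g \<in> carrier_mat 2 2"
  shows "mat_of_aut n (aut_of_mat n g) = g"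
proof (rule eq_matI)
  fix i j assume "i < dim_row g" "j < dim_col g"
  then have "i = 0 \<or> i = 1" "j = 0 \<or> j = 1"
    using g by auto
  then show "mat_of_aut n (aut_of_mat n g) $$ (i, j) = g $$ (i, j)"
    using n unit_pair_Mset[OF n] unfolding mat_of_aut_def aut_of_mat_def mat2_act_def by fastforce
qed (use g in \<open>auto simp: mat_of_aut_def\<close>)

lemma aut_of_mat_mult:
  assumes "g \<in> carrier_mat 2 2" "h \<in> carrier_mat 2 2"
  shows "aut_of_mat n (g * h) = compose (Mset n) (aut_of_mat n g) (aut_of_mat n h)"
  using assms unfolding aut_of_mat_def compose_def
  by (auto simp: mat2_act_Mset mat2_act_mult)

lemma aut_of_mat_AutA:
  fixes g :: "'a::field mat"
  assumes g: "g \<in> carrier_mat 2 2" and det: "det g \<noteq> 0"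
  shows "aut_of_mat n g \<in> AutA n"
proof -
  obtain h where h: "h \<in> carrier_mat 2 2" "h * g = 1\<^sub>m 2" "g * h = 1\<^sub>m 2"
    using det_non_zero_imp_unit[OF g det, of "()"] unfolding Units_def ring_mat_def by auto
  have "bij_betw (aut_of_mat n g) (Mset n) (Mset n)"
    using g h unfolding aut_of_mat_def
    by (intro bij_betw_byWitness[where f' = "mat2_act h"]) (auto simp: mat2_act_Mset mat2_act_mult mat2_act_one)
  moreover have "addM m m' \<in> Mset n" if "m \<in> Mset n" "m' \<in> Mset n" for m m' :: "'a vec \<times> 'a vec"
    using that unfolding addM_def Mset_def by auto
  moreover have "actM m a \<in> Mset n" if "m \<in> Mset n" "a \<in> carrier_mat (2*n) (2*n)" for m :: "'a vec \<times> 'a vec" and a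
    using that unfolding actM_def Mset_def by auto
  ultimately show ?thesis
    unfolding AutA_def aut_of_mat_def by (auto simp: mat2_act_Mset mat2_act_addM mat2_act_actM)
qed

subsection \<open>The group \<open>U(\<gamma>, \<chi>)\<close>\<close>

lemma nontriv_add_char_scale_eq_1:
  fixes d :: "'a::field"
  assumes \<psi>: "nontriv_add_char \<psi>" and scale: "\<And>t. \<psi> (d * t) = \<psi> t"
  shows "d = 1"
proof (rule ccontr)
  assume d: "d \<noteq> 1"
  obtain a where a: "\<psi> a \<noteq> 1"
    using \<psi> unfolding nontriv_add_char_def by auto
  define t where "t = a / (d - 1)"
  have "d * t = t + a"
    using d unfolding t_def by (simp add: field_simps)
  then have "\<psi> t = \<psi> t * \<psi> a"
    using scale[of t] \<psi> unfolding nontriv_add_char_def by metis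
  moreover have "\<psi> t \<noteq> 0"
    using \<psi> unfolding nontriv_add_char_def by auto
  ultimately show False
    using a by simp
qed

lemma det_mat_of_aut_Ugroup:
  fixes \<beta> :: "'a::field vec \<times> 'a vec \<Rightarrow> 'a vec \<times> 'a vec"
  assumes \<beta>: "\<beta> \<in> carrier (Ugroup n \<psi>)" and n: "1 \<le> n" and \<psi>: "nontriv_add_char \<psi>"
  shows "det (mat_of_aut n \<beta>) = 1"
proof (rule nontriv_add_char_scale_eq_1[OF \<psi>])
  fix t :: 'a
  define m where "m = (((- t) \<cdot>\<^sub>v unit_vec (2*n) 0, 0\<^sub>v (2*n)) :: 'a vec \<times> 'a vec)"
  define m' where "m' = ((0\<^sub>v (2*n), unit_vec (2*n) n) :: 'a vec \<times> 'a vec)"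
  have mM: "m \<in> Mset n" "m' \<in> Mset n"
    unfolding m_def m'_def Mset_def by auto
  have \<beta>A: "\<beta> \<in> AutA n"
    using \<beta> unfolding Ugroup_def by simp
  have "sform n (fst m) (snd m') - sform n (snd m) (fst m') = t"
    using n sform_unit_vec_0_n[OF n, where 'a = 'a]
    by (simp add: m_def m'_def sform_def rvm_carrier[OF Jmat_carrier])
  moreover have "chiM n \<psi> (\<beta> m) (\<beta> m') = chiM n \<psi> m m'"
    using \<beta> mM unfolding Ugroup_def by auto
  ultimately show "\<psi> (det (mat_of_aut n \<beta>) * t) = \<psi> t"
    unfolding chiM_def AutA_apply[OF \<beta>A n mM(1)] AutA_apply[OF \<beta>A n mM(2)]
      pairing_mat2_act[OF mat_of_aut_carrier mM] by simp
qed

lemma aut_of_mat_Ugroup: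
  fixes g :: "'a::field mat"
  assumes g: "g \<in> carrier SL2" and two: "(2::'a) \<noteq> 0"
  shows "aut_of_mat n g \<in> carrier (Ugroup n \<psi>)"
proof -
  have gc: "g \<in> carrier_mat 2 2" and det: "det g = 1"
    using g unfolding SL2_def by auto
  have "gammaM n \<psi> u (aut_of_mat n g m) = gammaM n \<psi> u m" if "u \<in> symA n" "m \<in> Mset n" for u m
    using that unfolding gammaM_def aut_of_mat_def by (simp add: sform_rvm_symA_mat2_act[OF _ two gc] det)
  moreover have "chiM n \<psi> (aut_of_mat n g m) (aut_of_mat n g m') = chiM n \<psi> m m'"
    if "m \<in> Mset n" "m' \<in> Mset n" for m m'
    using that unfolding chiM_def aut_of_mat_def by (simp add: pairing_mat2_act[OF gc] det)
  ultimately show ?thesis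
    using aut_of_mat_AutA[OF gc] det unfolding Ugroup_def by simp
qed

lemma carrier_Ugroup_eq:
  fixes \<psi> :: "'a::field \<Rightarrow> complex"
  assumes n: "1 \<le> n" and two: "(2::'a) \<noteq> 0" and \<psi>: "nontriv_add_char \<psi>"
  shows "carrier (Ugroup n \<psi>) = aut_of_mat n ` carrier SL2"
proof
  show "carrier (Ugroup n \<psi>) \<subseteq> aut_of_mat n ` carrier SL2"
  proof
    fix \<beta> assume \<beta>: "\<beta> \<in> carrier (Ugroup n \<psi>)"
    then have "\<beta> = aut_of_mat n (mat_of_aut n \<beta>)"
      using n unfolding Ugroup_def by (simp add: AutA_eq_aut_of_mat)
    moreover have "mat_of_aut n \<beta> \<in> carrier SL2"
      using det_mat_of_aut_Ugroup[OF \<beta> n \<psi>] unfolding SL2_def by simp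
    ultimately show "\<beta> \<in> aut_of_mat n ` carrier SL2" by blast
  qed
  show "aut_of_mat n ` carrier SL2 \<subseteq> carrier (Ugroup n \<psi>)"
    using aut_of_mat_Ugroup[OF _ two] by blast
qed

lemma two_neq_zero_if_odd_card:
  assumes "odd (card (UNIV :: 'a::{field,finite} set))"
  shows "(2::'a) \<noteq> 0"
proof
  assume "(2::'a) = 0"
  then have "CHAR('a) dvd 2"
    by (metis of_nat_eq_0_iff_char_dvd of_nat_numeral)
  moreover have "odd CHAR('a)"
    using assms CHAR_dvd_CARD dvd_trans by blast
  ultimately have "CHAR('a) = 1"
    by (metis prime_nat_iff two_is_prime_nat)
  then show False
    by (metis of_nat_CHAR of_nat_1 one_neq_zero)
qed

lemma SL2_mult_closed:
  "g \<in> carrier SL2 \<Longrightarrow> h \<in> carrier SL2 \<Longrightarrow> g * h \<in> carrier (SL2 :: 'a::comm_ring_1 mat monoid)"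
  unfolding SL2_def by (auto simp: det_mult)

lemma mat_of_aut_iso:
  fixes \<psi> :: "'a::field \<Rightarrow> complex"
  assumes n: "1 \<le> n" and two: "(2::'a) \<noteq> 0" and \<psi>: "nontriv_add_char \<psi>"
  shows "mat_of_aut n \<in> iso (Ugroup n \<psi>) SL2"
proof -
  have carrier_U: "carrier (Ugroup n \<psi>) = aut_of_mat n ` carrier SL2"
    by (rule carrier_Ugroup_eq[OF n two \<psi>])
  have mat_of_aut_inv [simp]: "mat_of_aut n (aut_of_mat n g) = g" if "g \<in> carrier SL2" for g :: "'a mat"
    using that n mat_of_aut_aut_of_mat unfolding SL2_def by auto
  have "mat_of_aut n \<in> hom (Ugroup n \<psi>) SL2"
  proof (rule homI)
    fix \<beta> \<beta>' assume "\<beta> \<in> carrier (Ugroup n \<psi>)" "\<beta>' \<in> carrier (Ugroup n \<psi>)"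
    then obtain g h where gh: "g \<in> carrier SL2" "h \<in> carrier SL2" and "\<beta> = aut_of_mat n g" "\<beta>' = aut_of_mat n h"
      unfolding carrier_U by blast
    then have "\<beta> \<otimes>\<^bsub>Ugroup n \<psi>\<^esub> \<beta>' = aut_of_mat n (g \<otimes>\<^bsub>SL2\<^esub> h)"
      unfolding Ugroup_def SL2_def by (simp add: aut_of_mat_mult)
    then show "mat_of_aut n (\<beta> \<otimes>\<^bsub>Ugroup n \<psi>\<^esub> \<beta>') = mat_of_aut n \<beta> \<otimes>\<^bsub>SL2\<^esub> mat_of_aut n \<beta>'"
      using gh \<open>\<beta> = aut_of_mat n g\<close> \<open>\<beta>' = aut_of_mat n h\<close> SL2_mult_closed[OF gh]
      by (simp add: SL2_def)
  qed (auto simp: carrier_U)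
  moreover have "bij_betw (mat_of_aut n) (carrier (Ugroup n \<psi>)) (carrier SL2)"
    unfolding carrier_U by (rule bij_betw_byWitness[where f' = "aut_of_mat n"]) auto
  ultimately show ?thesis
    unfolding iso_def by simp
qed

theorem mainTheorem5:
  fixes n :: nat and \<psi> :: "'k::{field,finite} \<Rightarrow> complex"
  assumes "odd (card (UNIV :: 'k set))" and "card (UNIV :: 'k set) > 3" and "n \<ge> 1"
    and "nontriv_add_char \<psi>"
  shows "Ugroup n \<psi> \<cong> (SL2 :: 'k mat monoid)"
  using mat_of_aut_iso[OF assms(3) two_neq_zero_if_odd_card[OF assms(1)] assms(4)] by (rule is_isoI)

end
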